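(* For all deterministic parity tree automata $A$ and $B$, Duplicator has a winning strategy in the automata game $G(A,B)$ if and only if $L(A)\le_W L(B)$.
   Context: A deterministic parity tree automaton is $A=\langle\Sigma,Q,\delta,q_0,\mathrm{rank}\rangle$ with $\delta:Q\times\Sigma\to Q\times Q$ total; we write $q\xrightarrow{\sigma}q_1,q_2$ for $\delta(q,\sigma)=(q_1,q_2)$. A run is accepting if on every path the highest rank seen infinitely often is even; $L(A)$ is the set of accepted trees. A state is all-rejecting if the automaton started there accepts no tree; $\bot$ denotes such a state. $\le_W$ is continuous (Wadge) reducibility between subsets of tree spaces $T_\Sigma$ with the standard Cantor-type metric. The automata game $G(A,B)$: initially one token of Spoiler is in the initial state of $A$ and one token of Duplicator in the initial state of $B$. In each round each player performs finitely many actions of the following kinds on his own automaton: (fire) for a token in state $q$ choose a transition $q\xrightarrow{\sigma}q_1,q_2$, remove the token and place new tokens in $q_1$ and $q_2$; (remove) remove a token lying in a state other than $\bot$. Spoiler (on $A$) must in each round perform an action for every token created in the previous round; Duplicator (on $B$) may postpone acting on a token, but not forever. The tokens of each player trace a partial run of the respective automaton; a removed token is interpreted as plugging in an accepting subrun at the corresponding node, yielding a full run of each automaton. Duplicator wins iff both resulting runs are accepting or both are rejecting. *)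

theory Defs
  imports "HOL-Analysis.Analysis"
begin

section \<open>Binary trees, deterministic parity tree automata\<close>

text \<open>Nodes of the full binary tree are \<open>bool list\<close> (False = left, True = right),
  listed from the root.\<close>

type_synonym 'a tree = "bool list \<Rightarrow> 'a"

record ('a, 'q) dpta =
  dpta_delta :: "'q \<Rightarrow> 'a \<Rightarrow> 'q \<times> 'q"
  dpta_init :: 'q
  dpta_rank :: "'q \<Rightarrow> nat"

definition dir :: "bool \<Rightarrow> 'q \<times> 'q \<Rightarrow> 'q" where
  "dir d qq = (if d then snd qq else fst qq)"

fun run_from :: "('a, 'q) dpta \<Rightarrow> 'q \<Rightarrow> 'a tree \<Rightarrow> bool list \<Rightarrow> 'q" where
  "run_from A q t [] = q"
| "run_from A q t (d # p) =
     run_from A (dir d (dpta_delta A q (t []))) (\<lambda>x. t (d # x)) p"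

definition path_pre :: "(nat \<Rightarrow> bool) \<Rightarrow> nat \<Rightarrow> bool list" where
  "path_pre \<pi> n = map \<pi> [0..<n]"

definition accepting_run :: "('a, 'q) dpta \<Rightarrow> 'q tree \<Rightarrow> bool" where
  "accepting_run A \<rho> \<longleftrightarrow>
     (\<forall>\<pi>. even (Max {k. \<exists>\<^sub>\<infinity>n. dpta_rank A (\<rho> (path_pre \<pi> n)) = k}))"

definition acc_from :: "('a, 'q) dpta \<Rightarrow> 'q \<Rightarrow> 'a tree \<Rightarrow> bool" where
  "acc_from A q t \<longleftrightarrow> accepting_run A (run_from A q t)"

definition lang :: "('a, 'q) dpta \<Rightarrow> 'a tree set" where
  "lang A = {t. acc_from A (dpta_init A) t}"

definition all_rejecting :: "('a, 'q) dpta \<Rightarrow> 'q \<Rightarrow> bool" where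
  "all_rejecting A q \<longleftrightarrow> \<not> (\<exists>t. acc_from A q t)"

section \<open>Wadge reducibility\<close>

definition tree_dist :: "'a tree \<Rightarrow> 'a tree \<Rightarrow> real" where
  "tree_dist t t' =
     (if t = t' then 0 else (1/2) ^ (LEAST n. \<exists>p. length p = n \<and> t p \<noteq> t' p))"

definition tree_continuous :: "('a tree \<Rightarrow> 'b tree) \<Rightarrow> bool" where
  "tree_continuous f \<longleftrightarrow>
     (\<forall>t. \<forall>\<epsilon>>0. \<exists>\<delta>>0. \<forall>t'. tree_dist t t' < \<delta> \<longrightarrow> tree_dist (f t) (f t') < \<epsilon>)"

definition wadge_le :: "'a tree set \<Rightarrow> 'b tree set \<Rightarrow> bool" where
  "wadge_le L M \<longleftrightarrow> (\<exists>f. tree_continuous f \<and> (\<forall>t. t \<in> L \<longleftrightarrow> f t \<in> M))"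

section \<open>The automata game G(A,B)\<close>

text \<open>A (complete) play of one player on his automaton is recorded as a partial map
  from tree nodes (= tokens) to the action performed on that token and the round
  (numbered from 0) in which it was performed. Firing a token in state q by the
  transition for letter \<sigma> is \<open>Fire \<sigma>\<close> (transitions are determined by the letter,
  the automaton being deterministic); \<open>Remove\<close> removes the token.\<close>

datatype 'a action = Fire 'a | Remove

type_synonym 'a play = "bool list \<Rightarrow> ('a action \<times> nat) option"

definition is_token :: "'a play \<Rightarrow> bool list \<Rightarrow> bool" where
  "is_token pl p \<longleftrightarrow> (\<forall>i < length p. \<exists>\<sigma> r. pl (take i p) = Some (Fire \<sigma>, r))"

fun state_from :: "('a, 'q) dpta \<Rightarrow> 'q \<Rightarrow> 'a play \<Rightarrow> bool list \<Rightarrow> 'q" where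
  "state_from A q pl [] = q"
| "state_from A q pl (d # p) =
     (case pl [] of
        Some (Fire \<sigma>, _) \<Rightarrow> state_from A (dir d (dpta_delta A q \<sigma>)) (\<lambda>x. pl (d # x)) p
      | _ \<Rightarrow> q)"

definition state_at :: "('a, 'q) dpta \<Rightarrow> 'a play \<Rightarrow> bool list \<Rightarrow> 'q" where
  "state_at A pl p = state_from A (dpta_init A) pl p"

text \<open>Common legality conditions: actions are performed exactly on tokens, each token is
  acted upon (eventually), a token is acted upon not earlier than the round in which it was
  created, finitely many actions per round, and only tokens not in an all-rejecting state
  are removed.\<close>
definition legal_play :: "('a, 'q) dpta \<Rightarrow> 'a play \<Rightarrow> bool" where
  "legal_play A pl \<longleftrightarrow>
     (\<forall>p. pl p \<noteq> None \<longleftrightarrow> is_token pl p) \<and>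
     (\<forall>p d \<sigma> r a r'. pl p = Some (Fire \<sigma>, r) \<longrightarrow> pl (p @ [d]) = Some (a, r') \<longrightarrow> r \<le> r') \<and>
     (\<forall>n. finite {p. \<exists>a. pl p = Some (a, n)}) \<and>
     (\<forall>p r. pl p = Some (Remove, r) \<longrightarrow> \<not> all_rejecting A (state_at A pl p))"

definition spoiler_legal :: "('a, 'q) dpta \<Rightarrow> 'a play \<Rightarrow> bool" where
  "spoiler_legal A pl \<longleftrightarrow> legal_play A pl \<and>
     (\<exists>a. pl [] = Some (a, 0)) \<and>
     (\<forall>p d \<sigma> r a r'. pl p = Some (Fire \<sigma>, r) \<longrightarrow> pl (p @ [d]) = Some (a, r') \<longrightarrow> r' \<le> Suc r)"

definition dup_legal :: "('a, 'q) dpta \<Rightarrow> 'a play \<Rightarrow> bool" where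
  "dup_legal A pl \<longleftrightarrow> legal_play A pl"

definition upto_round :: "nat \<Rightarrow> 'a play \<Rightarrow> 'a play" where
  "upto_round n pl = (\<lambda>p. case pl p of Some (a, r) \<Rightarrow> if r \<le> n then Some (a, r) else None
                                    | None \<Rightarrow> None)"

text \<open>The labelled tree traced by a play, where a removed token in state q is replaced by a
  fixed tree accepted from q (i.e. an accepting subrun is plugged in). The resulting run of the
  automaton is the run on this tree.\<close>
fun result_from :: "('a, 'q) dpta \<Rightarrow> 'q \<Rightarrow> 'a play \<Rightarrow> 'a tree" where
  "result_from A q pl [] =
     (case pl [] of
        Some (Fire \<sigma>, _) \<Rightarrow> \<sigma>
      | Some (Remove, _) \<Rightarrow> (SOME t. acc_from A q t) []
      | None \<Rightarrow> undefined)"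
| "result_from A q pl (d # p) =
     (case pl [] of
        Some (Fire \<sigma>, _) \<Rightarrow> result_from A (dir d (dpta_delta A q \<sigma>)) (\<lambda>x. pl (d # x)) p
      | Some (Remove, _) \<Rightarrow> (SOME t. acc_from A q t) (d # p)
      | None \<Rightarrow> undefined)"

definition result_tree :: "('a, 'q) dpta \<Rightarrow> 'a play \<Rightarrow> 'a tree" where
  "result_tree A pl = result_from A (dpta_init A) pl"

text \<open>A strategy of Duplicator maps Spoiler's play to Duplicator's play; Duplicator's actions in
  round n may depend only on Spoiler's actions in rounds 0..n (in each round Spoiler moves
  first).\<close>
definition dup_winning_strategy ::
  "('a, 'q) dpta \<Rightarrow> ('b, 'p) dpta \<Rightarrow> ('a play \<Rightarrow> 'b play) \<Rightarrow> bool" where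
  "dup_winning_strategy A B f \<longleftrightarrow>
     (\<forall>n s s'. spoiler_legal A s \<longrightarrow> spoiler_legal A s' \<longrightarrow>
        upto_round n s = upto_round n s' \<longrightarrow> upto_round n (f s) = upto_round n (f s')) \<and>
     (\<forall>s. spoiler_legal A s \<longrightarrow>
        dup_legal B (f s) \<and>
        (result_tree A s \<in> lang A \<longleftrightarrow> result_tree B (f s) \<in> lang B))"

definition dup_wins :: "('a, 'q) dpta \<Rightarrow> ('b, 'p) dpta \<Rightarrow> bool" where
  "dup_wins A B \<longleftrightarrow> (\<exists>f. dup_winning_strategy A B f)"

end

theory Submission
  imports Defs
begin

(*
  The argument never inspects acceptance: it translates strategies into continuous
  maps and back. Both translations rest on agreement of trees up to depth n, which
  characterises continuity in the Cantor metric: f is continuous iff each finite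
  prefix of f t is determined by a finite prefix of t (first section).

  Plays firing every token (never removing one) trace a prescribed tree; the tree
  traced by any play up to depth k is fixed by the rounds in which those levels
  were acted upon, and Spoiler acts on depth n by round n (second and third section).

  (=>) Spoiler fires the labels of a tree t, depth n in round n. The tree F t traced
  by Duplicator's winning answer is in L(B) iff t is in L(A), and F is continuous
  because Duplicator plays her first k levels within finitely many rounds.
  (<=) Given a continuous reduction f, Duplicator fires the label of f t at node p
  as soon as the tree t traced by Spoiler determines it, i.e. in round
  max |p| (modulus of continuity of f at t for depth |p|); her result is f t.
*)

section \<open>Agreement of trees and continuity\<close>

definition agree :: "nat \<Rightarrow> 'a tree \<Rightarrow> 'a tree \<Rightarrow> bool" where
  "agree n t t' \<longleftrightarrow> (\<forall>p. length p \<le> n \<longrightarrow> t p = t' p)"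

lemma agree_mono: "agree n t t' \<Longrightarrow> m \<le> n \<Longrightarrow> agree m t t'"
  by (auto simp: agree_def)

lemma agree_sym: "agree n t t' \<Longrightarrow> agree n t' t"
  by (auto simp: agree_def)

lemma agree_trans: "agree n t t' \<Longrightarrow> agree n t' t'' \<Longrightarrow> agree n t t''"
  by (auto simp: agree_def)

definition first_diff :: "'a tree \<Rightarrow> 'a tree \<Rightarrow> nat" where
  "first_diff t t' = (LEAST n. \<exists>p. length p = n \<and> t p \<noteq> t' p)"

lemma tree_dist_first_diff: "t \<noteq> t' \<Longrightarrow> tree_dist t t' = (1/2)^first_diff t t'"
  by (simp add: tree_dist_def first_diff_def)

lemma first_diff_le: "t p \<noteq> t' p \<Longrightarrow> first_diff t t' \<le> length p"
  unfolding first_diff_def by (rule Least_le) blast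

lemma first_diff_witness:
  assumes "t \<noteq> t'" shows "\<exists>p. length p = first_diff t t' \<and> t p \<noteq> t' p"
proof -
  obtain p where "t p \<noteq> t' p" using assms by blast
  hence "\<exists>n p. length p = n \<and> t p \<noteq> t' p" by blast
  thus ?thesis unfolding first_diff_def by (rule LeastI_ex)
qed

lemma tree_dist_less_imp_agree:
  assumes "tree_dist t t' < (1/2)^n" shows "agree n t t'"
  unfolding agree_def
proof (intro allI impI)
  fix p :: "bool list" assume p: "length p \<le> n"
  show "t p = t' p"
  proof (rule ccontr)
    assume ne: "t p \<noteq> t' p"
    hence "t \<noteq> t'" by auto
    have "first_diff t t' \<le> length p" using ne by (rule first_diff_le)
    hence "first_diff t t' \<le> n" using p by simp
    hence "(1/2::real)^n \<le> (1/2)^first_diff t t'" by (rule power_decreasing) auto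
    also have "\<dots> = tree_dist t t'" using tree_dist_first_diff[OF \<open>t \<noteq> t'\<close>] by simp
    finally show False using assms by simp
  qed
qed

lemma agree_imp_tree_dist_le:
  assumes "agree n t t'" shows "tree_dist t t' \<le> (1/2)^Suc n"
proof (cases "t = t'")
  case True thus ?thesis by (simp add: tree_dist_def)
next
  case False
  then obtain p where p: "length p = first_diff t t'" "t p \<noteq> t' p"
    using first_diff_witness by blast
  have "Suc n \<le> first_diff t t'" using assms p by (auto simp: agree_def not_less_eq_eq[symmetric])
  hence "(1/2::real)^first_diff t t' \<le> (1/2)^Suc n" by (rule power_decreasing) auto
  thus ?thesis using tree_dist_first_diff[OF False] by simp
qed

lemma tree_continuous_iff_agree:
  "tree_continuous f \<longleftrightarrow> (\<forall>t k. \<exists>n. \<forall>t'. agree n t t' \<longrightarrow> agree k (f t) (f t'))"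
proof
  assume cont: "tree_continuous f"
  show "\<forall>t k. \<exists>n. \<forall>t'. agree n t t' \<longrightarrow> agree k (f t) (f t')"
  proof (intro allI)
    fix t k
    have "(1/2::real)^k > 0" by simp
    then obtain \<delta> where "\<delta> > 0" and \<delta>: "\<And>t'. tree_dist t t' < \<delta> \<Longrightarrow> tree_dist (f t) (f t') < (1/2)^k"
      using cont unfolding tree_continuous_def by blast
    obtain n where n: "(1/2::real)^n < \<delta>" using real_arch_pow_inv[OF \<open>\<delta> > 0\<close>, of "1/2"] by auto
    have "agree k (f t) (f t')" if "agree n t t'" for t'
    proof -
      have "tree_dist t t' \<le> (1/2)^Suc n" using that by (rule agree_imp_tree_dist_le)
      also have "\<dots> \<le> (1/2)^n" by (rule power_decreasing) auto
      finally have "tree_dist t t' < \<delta>" using n by simp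
      thus ?thesis using \<delta> tree_dist_less_imp_agree by blast
    qed
    thus "\<exists>n. \<forall>t'. agree n t t' \<longrightarrow> agree k (f t) (f t')" by blast
  qed
next
  assume det: "\<forall>t k. \<exists>n. \<forall>t'. agree n t t' \<longrightarrow> agree k (f t) (f t')"
  show "tree_continuous f" unfolding tree_continuous_def
  proof (intro allI impI)
    fix t and \<epsilon> :: real assume "\<epsilon> > 0"
    obtain k where k: "(1/2::real)^k < \<epsilon>" using real_arch_pow_inv[OF \<open>\<epsilon> > 0\<close>, of "1/2"] by auto
    obtain n where n: "\<And>t'. agree n t t' \<Longrightarrow> agree k (f t) (f t')" using det by blast
    have "tree_dist (f t) (f t') < \<epsilon>" if "tree_dist t t' < (1/2)^n" for t'
    proof -
      have "agree k (f t) (f t')" using n tree_dist_less_imp_agree[OF that] .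
      hence "tree_dist (f t) (f t') \<le> (1/2)^Suc k" by (rule agree_imp_tree_dist_le)
      also have "\<dots> \<le> (1/2)^k" by (rule power_decreasing) auto
      finally show ?thesis using k by simp
    qed
    moreover have "(0::real) < (1/2)^n" by simp
    ultimately show "\<exists>\<delta>>0. \<forall>t'. tree_dist t t' < \<delta> \<longrightarrow> tree_dist (f t) (f t') < \<epsilon>"
      by blast
  qed
qed

section \<open>Plays that fire at every node\<close>

text \<open>The play that fires every token p with the letter \<open>u p\<close> in round \<open>r p\<close>; it never
  removes a token, so it traces exactly the tree u.\<close>

definition fire_play :: "'a tree \<Rightarrow> (bool list \<Rightarrow> nat) \<Rightarrow> 'a play" where
  "fire_play u r = (\<lambda>p. Some (Fire (u p), r p))"

lemma result_tree_fire_play: "result_tree A (fire_play u r) = u"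
proof -
  have "result_from A q (fire_play u r) p = u p" for q p
    by (induction p arbitrary: q u r) (simp_all add: fire_play_def)
  thus ?thesis by (simp add: result_tree_def fun_eq_iff)
qed

text \<open>Such a play is legal if rounds never decrease from a node to its children and
  a node is never acted upon before the round given by its depth (which keeps the number
  of actions per round finite).\<close>

lemma legal_fire_play:
  assumes depth: "\<And>p. length p \<le> r p" and mono: "\<And>p d. r p \<le> r (p @ [d])"
  shows "legal_play A (fire_play u r)"
proof -
  have "{p. \<exists>a. fire_play u r p = Some (a, n)} \<subseteq> {p. length p \<le> n}" for n
    using depth by (auto simp: fire_play_def)
  moreover have "finite {p :: bool list. length p \<le> n}" for n
    using finite_lists_length_le[of "UNIV :: bool set" n] by simp
  ultimately have "finite {p. \<exists>a. fire_play u r p = Some (a, n)}" for n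
    by (rule finite_subset)
  thus ?thesis using mono unfolding legal_play_def is_token_def by (auto simp: fire_play_def)
qed

lemma spoiler_legal_tree_play: "spoiler_legal A (fire_play t length)"
  using legal_fire_play[of length] unfolding spoiler_legal_def by (simp add: fire_play_def)

lemma upto_round_fire_play_eq:
  assumes "\<And>p. r p \<le> n \<or> r' p \<le> n \<Longrightarrow> r p = r' p \<and> u p = u' p"
  shows "upto_round n (fire_play u r) = upto_round n (fire_play u' r')"
proof (rule ext)
  fix p
  show "upto_round n (fire_play u r) p = upto_round n (fire_play u' r') p"
  proof (cases "r p \<le> n \<or> r' p \<le> n")
    case True thus ?thesis using assms[OF True] by (simp add: upto_round_def fire_play_def)
  next
    case False thus ?thesis by (simp add: upto_round_def fire_play_def)
  qed
qed

section \<open>The traced tree is determined by the early rounds\<close>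

lemma result_from_cong:
  "(\<And>i. i \<le> length p \<Longrightarrow> (\<forall>j<i. \<exists>\<sigma> r. pl (take j p) = Some (Fire \<sigma>, r))
      \<Longrightarrow> pl (take i p) = pl' (take i p))
   \<Longrightarrow> result_from A q pl p = result_from A q pl' p"
proof (induction p arbitrary: q pl pl')
  case Nil
  have "pl [] = pl' []" using Nil[of 0] by simp
  thus ?case by simp
next
  case (Cons d p)
  have root: "pl [] = pl' []" using Cons.prems[of 0] by simp
  show ?case
  proof (cases "pl []")
    case (Some x)
    then obtain a r where x: "pl [] = Some (a, r)" by (cases x) auto
    show ?thesis
    proof (cases a)
      case (Fire \<sigma>)
      let ?q' = "dir d (dpta_delta A q \<sigma>)"
      have "result_from A ?q' (\<lambda>x. pl (d # x)) p = result_from A ?q' (\<lambda>x. pl' (d # x)) p"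
      proof (rule Cons.IH)
        fix i assume i: "i \<le> length p"
          and tok: "\<forall>j<i. \<exists>\<sigma> r. pl (d # take j p) = Some (Fire \<sigma>, r)"
        have "\<forall>j<Suc i. \<exists>\<sigma> r. pl (take j (d # p)) = Some (Fire \<sigma>, r)"
          using tok x Fire by (auto simp: less_Suc_eq_0_disj)
        from Cons.prems[OF _ this] i show "pl (d # take i p) = pl' (d # take i p)" by simp
      qed
      thus ?thesis using x root Fire by simp
    qed (use x root in simp)
  qed (use root in simp)
qed

text \<open>Finitely many nodes lie up to a given depth, so they are all acted upon within
  boundedly many rounds.\<close>

lemma play_round_bound:
  fixes pl :: "'a play" shows "\<exists>N. \<forall>p a r. length p \<le> k \<longrightarrow> pl p = Some (a, r) \<longrightarrow> r \<le> N"
proof -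
  let ?round = "\<lambda>p. case pl p of Some (a, r) \<Rightarrow> r | None \<Rightarrow> 0"
  have "finite (?round ` {p. length p \<le> k})"
    using finite_lists_length_le[of "UNIV :: bool set" k] by simp
  then obtain N where N: "\<forall>x \<in> ?round ` {p. length p \<le> k}. x \<le> N"
    by (auto simp: finite_nat_set_iff_bounded_le)
  have "r \<le> N" if "length p \<le> k" "pl p = Some (a, r)" for p a r
  proof -
    have "r = ?round p" using that(2) by simp
    hence "r \<in> ?round ` {p. length p \<le> k}" using that(1) by blast
    thus ?thesis using N by blast
  qed
  thus ?thesis by blast
qed

lemma result_agree_by_round:
  assumes legal: "legal_play A pl"
    and bound: "\<And>p a r. length p \<le> k \<Longrightarrow> pl p = Some (a, r) \<Longrightarrow> r \<le> N"
    and same: "upto_round N pl = upto_round N pl'"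
  shows "agree k (result_tree A pl) (result_tree A pl')"
  unfolding agree_def result_tree_def
proof (intro allI impI)
  fix p :: "bool list" assume p: "length p \<le> k"
  show "result_from A (dpta_init A) pl p = result_from A (dpta_init A) pl' p"
  proof (rule result_from_cong)
    fix i assume i: "i \<le> length p"
      and tok: "\<forall>j<i. \<exists>\<sigma> r. pl (take j p) = Some (Fire \<sigma>, r)"
    have "is_token pl (take i p)" unfolding is_token_def using tok i by (simp add: min_def)
    then obtain a r where ar: "pl (take i p) = Some (a, r)"
      using legal unfolding legal_play_def by fastforce
    have "r \<le> N" using bound[OF _ ar] p i by simp
    hence "upto_round N pl (take i p) = Some (a, r)" using ar by (simp add: upto_round_def)
    hence "upto_round N pl' (take i p) = Some (a, r)" using same by simp
    hence "pl' (take i p) = Some (a, r)"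
      by (auto simp: upto_round_def split: option.splits if_splits)
    thus "pl (take i p) = pl' (take i p)" using ar by simp
  qed
qed

lemma spoiler_round_le_depth:
  assumes "spoiler_legal A s" shows "s p = Some (a, r) \<Longrightarrow> r \<le> length p"
proof (induction p arbitrary: a r rule: rev_induct)
  case Nil
  then show ?case using assms unfolding spoiler_legal_def by auto
next
  case (snoc d p)
  have "is_token s (p @ [d])"
    using assms snoc.prems unfolding spoiler_legal_def legal_play_def by blast
  hence "\<exists>\<sigma> r0. s (take (length p) (p @ [d])) = Some (Fire \<sigma>, r0)"
    unfolding is_token_def by (metis length_append_singleton lessI)
  then obtain \<sigma> r0 where r0: "s p = Some (Fire \<sigma>, r0)" by auto
  have "r \<le> Suc r0" using assms r0 snoc.prems unfolding spoiler_legal_def by blast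
  thus ?case using snoc.IH[OF r0] by simp
qed

corollary spoiler_result_agree:
  assumes "spoiler_legal A s" "upto_round n s = upto_round n s'"
  shows "agree n (result_tree A s) (result_tree A s')"
proof (rule result_agree_by_round)
  show "legal_play A s" using assms(1) by (simp add: spoiler_legal_def)
  show "r \<le> n" if "length p \<le> n" "s p = Some (a, r)" for p a r
    using spoiler_round_le_depth[OF assms(1) that(2)] that(1) by simp
qed (fact assms(2))

section \<open>A winning strategy yields a continuous reduction\<close>

text \<open>F is continuous: Duplicator plays her first k levels within
  finitely many rounds, and these rounds depend only on a finite prefix of t.\<close>

lemma winning_strategy_imp_wadge_le:
  assumes win: "dup_winning_strategy A B g"
  shows "wadge_le (lang A) (lang B)"
proof -
  define F where "F = (\<lambda>t. result_tree B (g (fire_play t length)))"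
  have causal: "upto_round n (g s) = upto_round n (g s')"
    if "spoiler_legal A s" "spoiler_legal A s'" "upto_round n s = upto_round n s'" for n s s'
    using win that unfolding dup_winning_strategy_def by blast
  have reduces: "t \<in> lang A \<longleftrightarrow> F t \<in> lang B" for t
  proof -
    have "result_tree A (fire_play t length) \<in> lang A
          \<longleftrightarrow> result_tree B (g (fire_play t length)) \<in> lang B"
      using win spoiler_legal_tree_play unfolding dup_winning_strategy_def by blast
    thus ?thesis by (simp add: F_def result_tree_fire_play)
  qed
  have "\<exists>N. \<forall>t'. agree N t t' \<longrightarrow> agree k (F t) (F t')" for t k
  proof -
    let ?s = "fire_play t length"
    have legal: "legal_play B (g ?s)"
      using win spoiler_legal_tree_play unfolding dup_winning_strategy_def dup_legal_def by blast
    obtain N where N: "\<And>p a r. length p \<le> k \<Longrightarrow> g ?s p = Some (a, r) \<Longrightarrow> r \<le> N"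
      using play_round_bound by blast
    have "agree k (F t) (F t')" if "agree N t t'" for t'
    proof -
      have "upto_round N ?s = upto_round N (fire_play t' length)"
        using that by (intro upto_round_fire_play_eq) (simp add: agree_def)
      hence "upto_round N (g ?s) = upto_round N (g (fire_play t' length))"
        by (intro causal spoiler_legal_tree_play)
      from result_agree_by_round[OF legal N this] show ?thesis by (simp add: F_def)
    qed
    thus ?thesis by blast
  qed
  hence "tree_continuous F" by (simp add: tree_continuous_iff_agree)
  thus ?thesis using reduces unfolding wadge_le_def by blast
qed

section \<open>A continuous reduction yields a winning strategy\<close>

definition determines :: "('a tree \<Rightarrow> 'b tree) \<Rightarrow> 'a tree \<Rightarrow> nat \<Rightarrow> nat \<Rightarrow> bool" where
  "determines f t k n \<longleftrightarrow> (\<forall>t'. agree n t t' \<longrightarrow> agree k (f t) (f t'))"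

definition modulus :: "('a tree \<Rightarrow> 'b tree) \<Rightarrow> 'a tree \<Rightarrow> nat \<Rightarrow> nat" where
  "modulus f t k = (LEAST n. determines f t k n)"

lemma determines_modulus: "tree_continuous f \<Longrightarrow> determines f t k (modulus f t k)"
  unfolding modulus_def by (rule LeastI_ex) (simp add: determines_def tree_continuous_iff_agree)

lemma determines_mono:
  assumes "determines f t k n" "k' \<le> k" "n \<le> n'" shows "determines f t k' n'"
  unfolding determines_def
proof (intro allI impI)
  fix t' assume "agree n' t t'"
  hence "agree n t t'" using assms(3) by (rule agree_mono)
  hence "agree k (f t) (f t')" using assms(1) unfolding determines_def by blast
  thus "agree k' (f t) (f t')" using assms(2) by (rule agree_mono)
qed

lemma modulus_mono:
  assumes cont: "tree_continuous f" and "k \<le> k'" shows "modulus f t k \<le> modulus f t k'"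
proof -
  have "determines f t k (modulus f t k')"
    using determines_modulus[OF cont, of t k'] assms(2) by (rule determines_mono) simp
  thus ?thesis unfolding modulus_def[of f t k] by (rule Least_le)
qed

text \<open>Whether a depth m determines f at t up to depth k depends only on the first m levels
  of t; hence the modulus is the same for all trees agreeing with t up to the modulus.\<close>

lemma determines_transfer:
  assumes "determines f t k m" "agree n t t'" "m \<le> n"
  shows "determines f t' k m"
  unfolding determines_def
proof (intro allI impI)
  fix t'' assume t't'': "agree m t' t''"
  have tt': "agree m t t'" using assms(2,3) by (rule agree_mono)
  hence "agree m t t''" using t't'' by (rule agree_trans)
  hence "agree k (f t) (f t'')" using assms(1) unfolding determines_def by blast
  moreover have "agree k (f t) (f t')" using assms(1) tt' unfolding determines_def by blast
  ultimately show "agree k (f t') (f t'')" by (meson agree_sym agree_trans)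
qed

lemma modulus_local:
  assumes cont: "tree_continuous f" and tt': "agree n t t'" and le: "modulus f t k \<le> n"
  shows "modulus f t' k = modulus f t k" and "agree k (f t) (f t')"
proof -
  have "determines f t' k (modulus f t k)"
    using determines_modulus[OF cont] tt' le by (rule determines_transfer)
  hence le': "modulus f t' k \<le> modulus f t k" unfolding modulus_def[of f t' k] by (rule Least_le)
  have "modulus f t' k \<le> n" using le' le by simp
  with determines_modulus[OF cont] agree_sym[OF tt']
  have "determines f t k (modulus f t' k)" by (rule determines_transfer)
  hence "modulus f t k \<le> modulus f t' k" unfolding modulus_def[of f t k] by (rule Least_le)
  with le' show "modulus f t' k = modulus f t k" by simp
  show "agree k (f t) (f t')"
    using determines_modulus[OF cont, of t k] agree_mono[OF tt' le] unfolding determines_def by blast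
qed

text \<open>Duplicator's answer to a Spoiler play tracing t: she fires the label of f t at node p
  in the first round by which p carries a token and Spoiler has fixed enough of t to
  determine that label.\<close>

definition answer_round :: "('a tree \<Rightarrow> 'b tree) \<Rightarrow> 'a tree \<Rightarrow> bool list \<Rightarrow> nat" where
  "answer_round f t p = max (length p) (modulus f t (length p))"

definition answer_play :: "('a tree \<Rightarrow> 'b tree) \<Rightarrow> 'a tree \<Rightarrow> 'b play" where
  "answer_play f t = fire_play (f t) (answer_round f t)"

lemma answer_play_legal:
  assumes cont: "tree_continuous f" shows "legal_play B (answer_play f t)"
  unfolding answer_play_def answer_round_def
proof (rule legal_fire_play)
  show "length p \<le> max (length p) (modulus f t (length p))" for p by simp
  show "max (length p) (modulus f t (length p))
        \<le> max (length (p @ [d])) (modulus f t (length (p @ [d])))" for p d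
    using modulus_mono[OF cont, of "length p" "Suc (length p)" t] by auto
qed

lemma answer_play_causal:
  assumes cont: "tree_continuous f" and tt': "agree n t t'"
  shows "upto_round n (answer_play f t) = upto_round n (answer_play f t')"
proof -
  have local: "answer_round f u' p = answer_round f u p \<and> f u' p = f u p"
    if "agree n u u'" "answer_round f u p \<le> n" for u u' p
  proof -
    have "modulus f u (length p) \<le> n" using that(2) by (simp add: answer_round_def)
    from modulus_local[OF cont that(1) this] show ?thesis
      by (simp add: answer_round_def agree_def)
  qed
  show ?thesis unfolding answer_play_def
  proof (rule upto_round_fire_play_eq)
    fix p assume "answer_round f t p \<le> n \<or> answer_round f t' p \<le> n"
    thus "answer_round f t p = answer_round f t' p \<and> f t p = f t' p"
      using local[OF tt', of p] local[OF agree_sym[OF tt'], of p] by auto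
  qed
qed

lemma wadge_reduction_imp_winning_strategy:
  assumes cont: "tree_continuous f" and reduces: "\<forall>t. t \<in> lang A \<longleftrightarrow> f t \<in> lang B"
  shows "dup_winning_strategy A B (\<lambda>s. answer_play f (result_tree A s))"
  unfolding dup_winning_strategy_def
proof (intro conjI allI impI)
  fix n s s' assume "spoiler_legal A s" "spoiler_legal A s'" "upto_round n s = upto_round n s'"
  hence "agree n (result_tree A s) (result_tree A s')" by (intro spoiler_result_agree)
  thus "upto_round n (answer_play f (result_tree A s)) = upto_round n (answer_play f (result_tree A s'))"
    by (rule answer_play_causal[OF cont])
next
  fix s
  show "dup_legal B (answer_play f (result_tree A s))"
    unfolding dup_legal_def using cont by (rule answer_play_legal)
  show "result_tree A s \<in> lang A \<longleftrightarrow> result_tree B (answer_play f (result_tree A s)) \<in> lang B"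
    using reduces by (simp add: answer_play_def result_tree_fire_play)
qed

theorem lemma5p2:
  fixes A :: "('a::finite, 'q::finite) dpta" and B :: "('b::finite, 'p::finite) dpta"
  shows "dup_wins A B \<longleftrightarrow> wadge_le (lang A) (lang B)"
proof
  assume "dup_wins A B"
  then obtain g where "dup_winning_strategy A B g" unfolding dup_wins_def by blast
  thus "wadge_le (lang A) (lang B)" by (rule winning_strategy_imp_wadge_le)
next
  assume "wadge_le (lang A) (lang B)"
  then obtain f where "tree_continuous f" "\<forall>t. t \<in> lang A \<longleftrightarrow> f t \<in> lang B"
    unfolding wadge_le_def by blast
  hence "dup_winning_strategy A B (\<lambda>s. answer_play f (result_tree A s))"
    by (rule wadge_reduction_imp_winning_strategy)
  thus "dup_wins A B" unfolding dup_wins_def by blast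
qed

end
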